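(* Let $X$ be a quasi-geodesic metric space and let $G\curvearrowright X$ be a cobounded quasi-action. Suppose that for $i=1,2$, $\rho_i:G\to\hat G_i$ are two topological completions of $G\curvearrowright X$. Then there exist compact normal subgroups $K_i\vartriangleleft\hat G_i$ ($i=1,2$) and an isomorphism of topological groups $\lambda:\hat G_1/K_1\to\hat G_2/K_2$ such that $\lambda\circ\pi_1\circ\rho_1=\pi_2\circ\rho_2$, where $\pi_i:\hat G_i\to\hat G_i/K_i$ are the quotient maps.
   Context: A metric space $X$ is quasi-geodesic if there are $K\ge1,A\ge0$ such that any two points can be joined by a chain $x_0,\dots,x_n$ with consecutive distances at most $A$ and $n\le Kd(x_0,x_n)+A$. A $(K,A)$-quasi-action of $G$ on $X$ assigns to each $g\in G$ a $(K,A)$-quasi-isometry $x\mapsto g\cdot x$ of $X$ with $d(h\cdot(g\cdot x),hg\cdot x)\le A$ and $d(e\cdot x,x)\le A$ for all $g,h,x$; it is cobounded if for some $r$, every $x,y$ admit $g$ with $d(g\cdot x,y)\le r$. A subset $T\subseteq G$ is bounded if $\{t\cdot x_0:t\in T\}$ is bounded for some (equivalently every) $x_0$. A topological completion is a homomorphism $\rho:G\to\hat G$ to a Hausdorff locally compact group with dense image such that for every $T\subseteq G$, $T$ is bounded iff $\overline{\rho(T)}$ is compact. *)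

theory Defs
  imports "HOL-Analysis.Analysis" "HOL-Algebra.Coset"
begin

definition quasi_isometry_on :: "'x::metric_space set \<Rightarrow> real \<Rightarrow> real \<Rightarrow> ('x \<Rightarrow> 'x) \<Rightarrow> bool" where
  "quasi_isometry_on X K A f \<longleftrightarrow>
     f ` X \<subseteq> X \<and>
     (\<forall>x\<in>X. \<forall>y\<in>X. dist x y / K - A \<le> dist (f x) (f y) \<and> dist (f x) (f y) \<le> K * dist x y + A) \<and>
     (\<forall>y\<in>X. \<exists>x\<in>X. dist (f x) y \<le> A)"

definition quasi_geodesic :: "'x::metric_space set \<Rightarrow> bool" where
  "quasi_geodesic X \<longleftrightarrow>
     (\<exists>K A. K \<ge> 1 \<and> A \<ge> 0 \<and>
        (\<forall>x\<in>X. \<forall>y\<in>X. \<exists>(n::nat) (c::nat \<Rightarrow> 'x).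
            c 0 = x \<and> c n = y \<and> (\<forall>i\<le>n. c i \<in> X) \<and>
            (\<forall>i<n. dist (c i) (c (Suc i)) \<le> A) \<and>
            real n \<le> K * dist x y + A))"

definition quasi_action_KA ::
  "('g, 'b) monoid_scheme \<Rightarrow> 'x::metric_space set \<Rightarrow> real \<Rightarrow> real \<Rightarrow> ('g \<Rightarrow> 'x \<Rightarrow> 'x) \<Rightarrow> bool" where
  "quasi_action_KA G X K A act \<longleftrightarrow>
     (\<forall>g\<in>carrier G. quasi_isometry_on X K A (act g)) \<and>
     (\<forall>g\<in>carrier G. \<forall>h\<in>carrier G. \<forall>x\<in>X. dist (act h (act g x)) (act (h \<otimes>\<^bsub>G\<^esub> g) x) \<le> A) \<and>
     (\<forall>x\<in>X. dist (act \<one>\<^bsub>G\<^esub> x) x \<le> A)"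

definition quasi_action ::
  "('g, 'b) monoid_scheme \<Rightarrow> 'x::metric_space set \<Rightarrow> ('g \<Rightarrow> 'x \<Rightarrow> 'x) \<Rightarrow> bool" where
  "quasi_action G X act \<longleftrightarrow> (\<exists>K A. K \<ge> 1 \<and> A \<ge> 0 \<and> quasi_action_KA G X K A act)"

definition cobounded_action ::
  "('g, 'b) monoid_scheme \<Rightarrow> 'x::metric_space set \<Rightarrow> ('g \<Rightarrow> 'x \<Rightarrow> 'x) \<Rightarrow> bool" where
  "cobounded_action G X act \<longleftrightarrow>
     (\<exists>r. \<forall>x\<in>X. \<forall>y\<in>X. \<exists>g\<in>carrier G. dist (act g x) y \<le> r)"

definition bounded_subset ::
  "('g, 'b) monoid_scheme \<Rightarrow> 'x::metric_space set \<Rightarrow> ('g \<Rightarrow> 'x \<Rightarrow> 'x) \<Rightarrow> 'g set \<Rightarrow> bool" where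
  "bounded_subset G X act T \<longleftrightarrow> (\<exists>x0\<in>X. bounded ((\<lambda>t. act t x0) ` T))"

definition topological_group :: "('h, 'c) monoid_scheme \<Rightarrow> 'h topology \<Rightarrow> bool" where
  "topological_group H T \<longleftrightarrow>
     group H \<and> topspace T = carrier H \<and>
     continuous_map (prod_topology T T) T (\<lambda>(x, y). x \<otimes>\<^bsub>H\<^esub> y) \<and>
     continuous_map T T (\<lambda>x. inv\<^bsub>H\<^esub> x)"

text \<open>Quotient topology on the coset space G/K (carrier of H Mod K), induced by x \<mapsto> K #> x.\<close>
definition quotient_group_topology :: "('h, 'c) monoid_scheme \<Rightarrow> 'h topology \<Rightarrow> 'h set \<Rightarrow> 'h set topology" where
  "quotient_group_topology H T K =
     topology (\<lambda>U. U \<subseteq> carrier (H Mod K) \<and> openin T (\<Union>U))"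

definition topological_completion ::
  "('g, 'b) monoid_scheme \<Rightarrow> 'x::metric_space set \<Rightarrow> ('g \<Rightarrow> 'x \<Rightarrow> 'x) \<Rightarrow>
   ('h, 'c) monoid_scheme \<Rightarrow> 'h topology \<Rightarrow> ('g \<Rightarrow> 'h) \<Rightarrow> bool" where
  "topological_completion G X act H T \<rho> \<longleftrightarrow>
     \<rho> \<in> hom G H \<and> topological_group H T \<and> Hausdorff_space T \<and> locally_compact_space T \<and>
     T closure_of (\<rho> ` carrier G) = topspace T \<and>
     (\<forall>S. S \<subseteq> carrier G \<longrightarrow>
        (bounded_subset G X act S \<longleftrightarrow> compactin T (T closure_of (\<rho> ` S))))"

end

theory Submission
  imports Defs
begin

(* Compare the completions through the closure \<Gamma> of {(\<rho>1 g, \<rho>2 g). g \<in> G} in the product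
   group, a closed subgroup. Since both completions make the same subsets of G relatively compact,
   \<Gamma> is proper over each factor; hence it projects onto both factors, its fibres are compact and
   x \<mapsto> \<Gamma>``{x} is upper semicontinuous. By Goursat's lemma \<Gamma> is the graph of an isomorphism
   between the quotients by K1 = {x. (x,1) \<in> \<Gamma>} and K2 = {y. (1,y) \<in> \<Gamma>}, and upper
   semicontinuity of \<Gamma> and of its converse makes that isomorphism a homeomorphism. *)

lemma continuous_map_group_mult:
  assumes "topological_group H T" "continuous_map Z T f" "continuous_map Z T g"
  shows "continuous_map Z T (\<lambda>z. f z \<otimes>\<^bsub>H\<^esub> g z)"
proof -
  have "continuous_map (prod_topology T T) T (\<lambda>(x, y). x \<otimes>\<^bsub>H\<^esub> y)"
    using assms(1) by (simp add: topological_group_def)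
  from continuous_map_compose[OF continuous_map_pairedI[OF assms(2,3)] this] show ?thesis
    by (simp add: o_def)
qed

lemma topological_group_DirProd:
  assumes "topological_group H1 T1" "topological_group H2 T2"
  shows "topological_group (H1 \<times>\<times> H2) (prod_topology T1 T2)"
proof -
  have grp: "group H1" "group H2" and ts: "topspace T1 = carrier H1" "topspace T2 = carrier H2"
    and inv: "continuous_map T1 T1 (m_inv H1)" "continuous_map T2 T2 (m_inv H2)"
    using assms by (auto simp: topological_group_def)
  let ?P = "prod_topology T1 T2"
  have fst_fst: "continuous_map (prod_topology ?P ?P) T1 (\<lambda>z. fst (fst z))"
   and fst_snd: "continuous_map (prod_topology ?P ?P) T1 (\<lambda>z. fst (snd z))"
   and snd_fst: "continuous_map (prod_topology ?P ?P) T2 (\<lambda>z. snd (fst z))"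
   and snd_snd: "continuous_map (prod_topology ?P ?P) T2 (\<lambda>z. snd (snd z))"
    by (auto intro: continuous_map_compose[OF continuous_map_fst, unfolded o_def]
        continuous_map_compose[OF continuous_map_snd, unfolded o_def] continuous_map_fst continuous_map_snd)
  have "continuous_map (prod_topology ?P ?P) ?P (\<lambda>z. fst z \<otimes>\<^bsub>H1 \<times>\<times> H2\<^esub> snd z)"
    unfolding mult_DirProd'
    by (intro continuous_map_pairedI continuous_map_group_mult assms fst_fst fst_snd snd_fst snd_snd)
  moreover have "continuous_map ?P ?P (\<lambda>(x, y). (inv\<^bsub>H1\<^esub> x, inv\<^bsub>H2\<^esub> y))"
    using inv by (simp add: continuous_map_prod_top)
  then have "continuous_map ?P ?P (m_inv (H1 \<times>\<times> H2))"
    by (rule continuous_map_eq) (use grp ts in \<open>auto simp: inv_DirProd\<close>)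
  ultimately show ?thesis
    using grp ts by (simp add: topological_group_def DirProd_group case_prod_unfold)
qed

lemma continuous_map_closure_of_into:
  assumes "continuous_map X Y f" "f ` S \<subseteq> S'" "x \<in> X closure_of S"
  shows "f x \<in> Y closure_of S'"
proof -
  have "f x \<in> Y closure_of (f ` S)"
    using assms(1,3) by (auto simp: continuous_map_eq_image_closure_subset)
  then show ?thesis
    using closure_of_mono[OF assms(2)] by blast
qed

lemma subgroup_closure_of:
  assumes "topological_group H T" "subgroup S H"
  shows "subgroup (T closure_of S) H"
proof -
  have grp: "group H" and ts: "topspace T = carrier H"
    and mult: "continuous_map (prod_topology T T) T (\<lambda>(x, y). x \<otimes>\<^bsub>H\<^esub> y)"
    and inv: "continuous_map T T (m_inv H)"
    using assms(1) by (auto simp: topological_group_def)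
  show ?thesis
  proof (rule group.subgroupI[OF grp])
    show "T closure_of S \<subseteq> carrier H"
      using closure_of_subset_topspace[of T S] ts by simp
    have "S \<subseteq> T closure_of S"
      using closure_of_subset[of S T] subgroup.subset[OF assms(2)] ts by simp
    then show "T closure_of S \<noteq> {}"
      using subgroup.one_closed[OF assms(2)] by blast
  next
    fix a assume "a \<in> T closure_of S"
    then show "inv\<^bsub>H\<^esub> a \<in> T closure_of S"
      by (rule continuous_map_closure_of_into[OF inv, rotated])
         (use subgroup.m_inv_closed[OF assms(2)] in auto)
  next
    fix a b assume "a \<in> T closure_of S" "b \<in> T closure_of S"
    then have "(a, b) \<in> prod_topology T T closure_of (S \<times> S)"
      by (simp add: closure_of_Times)
    moreover have "(\<lambda>(x, y). x \<otimes>\<^bsub>H\<^esub> y) ` (S \<times> S) \<subseteq> S"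
      using subgroup.m_closed[OF assms(2)] by auto
    ultimately have "(\<lambda>(x, y). x \<otimes>\<^bsub>H\<^esub> y) (a, b) \<in> T closure_of S"
      using continuous_map_closure_of_into[OF mult] by blast
    then show "a \<otimes>\<^bsub>H\<^esub> b \<in> T closure_of S"
      by simp
  qed
qed

lemma Union_Int_rcosets:
  assumes "group H" "subgroup K H" "\<S> \<subseteq> carrier (H Mod K)" "\<U> \<subseteq> carrier (H Mod K)"
  shows "\<Union>(\<S> \<inter> \<U>) = \<Union>\<S> \<inter> \<Union>\<U>"
proof
  show "\<Union>\<S> \<inter> \<Union>\<U> \<subseteq> \<Union>(\<S> \<inter> \<U>)"
  proof
    fix x assume "x \<in> \<Union>\<S> \<inter> \<Union>\<U>"
    then obtain A B where AB: "A \<in> \<S>" "B \<in> \<U>" "x \<in> A" "x \<in> B"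
      by blast
    then have "A \<in> rcosets\<^bsub>H\<^esub> K" "B \<in> rcosets\<^bsub>H\<^esub> K"
      using assms(3,4) by (auto simp: FactGroup_def)
    then have "A = B"
      using group.rcos_disjoint[OF assms(1,2)] AB unfolding pairwise_def disjnt_def by blast
    then show "x \<in> \<Union>(\<S> \<inter> \<U>)"
      using AB by blast
  qed
qed blast

lemma openin_quotient_group_topology:
  assumes "group H" "subgroup K H"
  shows "openin (quotient_group_topology H T K) \<U> \<longleftrightarrow>
           \<U> \<subseteq> carrier (H Mod K) \<and> openin T (\<Union>\<U>)"
proof -
  have "istopology (\<lambda>\<U>. \<U> \<subseteq> carrier (H Mod K) \<and> openin T (\<Union>\<U>))"
    unfolding istopology_def
  proof (intro conjI allI impI)
    fix \<S> \<U>
    assume \<S>: "\<S> \<subseteq> carrier (H Mod K) \<and> openin T (\<Union>\<S>)"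
      and \<U>: "\<U> \<subseteq> carrier (H Mod K) \<and> openin T (\<Union>\<U>)"
    then show "\<S> \<inter> \<U> \<subseteq> carrier (H Mod K)"
      by blast
    show "openin T (\<Union>(\<S> \<inter> \<U>))"
      using Union_Int_rcosets[OF assms] \<S> \<U> by auto
  next
    fix \<K>
    assume \<K>: "\<forall>\<U>\<in>\<K>. \<U> \<subseteq> carrier (H Mod K) \<and> openin T (\<Union>\<U>)"
    then show "\<Union>\<K> \<subseteq> carrier (H Mod K)"
      by blast
    have "\<Union>(\<Union>\<K>) = \<Union>(Union ` \<K>)"
      by blast
    then show "openin T (\<Union>(\<Union>\<K>))"
      using \<K> by auto
  qed
  then show ?thesis
    by (simp add: quotient_group_topology_def)
qed

lemma topspace_quotient_group_topology:
  assumes "group H" "subgroup K H" "topspace T = carrier H"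
  shows "topspace (quotient_group_topology H T K) = carrier (H Mod K)"
proof -
  have "\<Union>(carrier (H Mod K)) = topspace T"
    using group.rcosets_part_G[OF assms(1,2)] assms(3) by (simp add: FactGroup_def)
  then have "openin (quotient_group_topology H T K) (carrier (H Mod K))"
    by (simp add: openin_quotient_group_topology[OF assms(1,2)])
  moreover have "topspace (quotient_group_topology H T K) \<subseteq> carrier (H Mod K)"
    using openin_topspace[of "quotient_group_topology H T K"]
    unfolding openin_quotient_group_topology[OF assms(1,2)] by blast
  ultimately show ?thesis
    using openin_subset by blast
qed

locale goursat =
  fixes H1 :: "('a, 'c) monoid_scheme" and H2 :: "('b, 'd) monoid_scheme" and \<Gamma> :: "('a \<times> 'b) set"
  assumes group1: "group H1" and group2: "group H2"
    and subgroup: "subgroup \<Gamma> (H1 \<times>\<times> H2)"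
    and Domain: "Domain \<Gamma> = carrier H1" and Range: "Range \<Gamma> = carrier H2"
begin

lemma mem_carrier: "(x, y) \<in> \<Gamma> \<Longrightarrow> x \<in> carrier H1 \<and> y \<in> carrier H2"
  using subgroup.subset[OF subgroup] by auto

lemma mult_closed: "(x, y) \<in> \<Gamma> \<Longrightarrow> (x', y') \<in> \<Gamma> \<Longrightarrow> (x \<otimes>\<^bsub>H1\<^esub> x', y \<otimes>\<^bsub>H2\<^esub> y') \<in> \<Gamma>"
  using subgroup.m_closed[OF subgroup] by fastforce

lemma inv_closed: "(x, y) \<in> \<Gamma> \<Longrightarrow> (inv\<^bsub>H1\<^esub> x, inv\<^bsub>H2\<^esub> y) \<in> \<Gamma>"
  using subgroup.m_inv_closed[OF subgroup] mem_carrier inv_DirProd[OF group1 group2] by metis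

lemma one_closed: "(\<one>\<^bsub>H1\<^esub>, \<one>\<^bsub>H2\<^esub>) \<in> \<Gamma>"
  using subgroup.one_closed[OF subgroup] by simp

lemma converse: "goursat H2 H1 (\<Gamma>\<inverse>)"
proof -
  have "\<Gamma>\<inverse> = (\<lambda>(x, y). (y, x)) ` \<Gamma>"
    by force
  moreover have "group_hom (H1 \<times>\<times> H2) (H2 \<times>\<times> H1) (\<lambda>(x, y). (y, x))"
    using DirProd_commute_iso_set[of H1 H2] DirProd_group[OF group1 group2] DirProd_group[OF group2 group1]
    by (simp add: group_hom_def group_hom_axioms_def iso_def)
  ultimately have "subgroup (\<Gamma>\<inverse>) (H2 \<times>\<times> H1)"
    using group_hom.subgroup_img_is_subgroup[OF _ subgroup] by metis
  then show ?thesis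
    using group1 group2 Domain Range by (simp add: goursat_def)
qed

lemma right_kernel_normal: "\<Gamma> `` {\<one>\<^bsub>H1\<^esub>} \<lhd> H2"
proof -
  interpret H1: group H1 by (rule group1)
  interpret H2: group H2 by (rule group2)
  have "subgroup (\<Gamma> `` {\<one>\<^bsub>H1\<^esub>}) H2"
  proof (rule H2.subgroupI)
    show "\<Gamma> `` {\<one>\<^bsub>H1\<^esub>} \<subseteq> carrier H2"
      using mem_carrier by blast
    show "\<Gamma> `` {\<one>\<^bsub>H1\<^esub>} \<noteq> {}"
      using one_closed by blast
    show "inv\<^bsub>H2\<^esub> a \<in> \<Gamma> `` {\<one>\<^bsub>H1\<^esub>}" if "a \<in> \<Gamma> `` {\<one>\<^bsub>H1\<^esub>}" for a
      using inv_closed[of "\<one>\<^bsub>H1\<^esub>" a] that by simp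
    show "a \<otimes>\<^bsub>H2\<^esub> b \<in> \<Gamma> `` {\<one>\<^bsub>H1\<^esub>}" if "a \<in> \<Gamma> `` {\<one>\<^bsub>H1\<^esub>}" "b \<in> \<Gamma> `` {\<one>\<^bsub>H1\<^esub>}" for a b
      using mult_closed[of "\<one>\<^bsub>H1\<^esub>" a "\<one>\<^bsub>H1\<^esub>" b] that by simp
  qed
  moreover have "y \<otimes>\<^bsub>H2\<^esub> k \<otimes>\<^bsub>H2\<^esub> inv\<^bsub>H2\<^esub> y \<in> \<Gamma> `` {\<one>\<^bsub>H1\<^esub>}"
    if y: "y \<in> carrier H2" and k: "k \<in> \<Gamma> `` {\<one>\<^bsub>H1\<^esub>}" for y k
  proof -
    obtain x where x: "(x, y) \<in> \<Gamma>"
      using Range y by blast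
    then have "(x \<otimes>\<^bsub>H1\<^esub> \<one>\<^bsub>H1\<^esub> \<otimes>\<^bsub>H1\<^esub> inv\<^bsub>H1\<^esub> x, y \<otimes>\<^bsub>H2\<^esub> k \<otimes>\<^bsub>H2\<^esub> inv\<^bsub>H2\<^esub> y) \<in> \<Gamma>"
      using k by (intro mult_closed inv_closed) auto
    then show ?thesis
      using mem_carrier[OF x] by simp
  qed
  ultimately show ?thesis
    by (simp add: H2.normal_inv_iff)
qed

lemma left_kernel_normal: "\<Gamma>\<inverse> `` {\<one>\<^bsub>H2\<^esub>} \<lhd> H1"
  using goursat.right_kernel_normal[OF converse] .

lemma Image_singleton_eq_rcos:
  assumes "(x, y) \<in> \<Gamma>"
  shows "\<Gamma> `` {x} = \<Gamma> `` {\<one>\<^bsub>H1\<^esub>} #>\<^bsub>H2\<^esub> y"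
proof
  interpret H1: group H1 by (rule group1)
  interpret H2: group H2 by (rule group2)
  have xy: "x \<in> carrier H1" "y \<in> carrier H2"
    using mem_carrier[OF assms] by auto
  interpret N: subgroup "\<Gamma> `` {\<one>\<^bsub>H1\<^esub>}" H2
    using right_kernel_normal by (rule normal.axioms)
  show "\<Gamma> `` {x} \<subseteq> \<Gamma> `` {\<one>\<^bsub>H1\<^esub>} #>\<^bsub>H2\<^esub> y"
  proof
    fix y' assume "y' \<in> \<Gamma> `` {x}"
    then have "(x \<otimes>\<^bsub>H1\<^esub> inv\<^bsub>H1\<^esub> x, y' \<otimes>\<^bsub>H2\<^esub> inv\<^bsub>H2\<^esub> y) \<in> \<Gamma>"
      using assms by (auto intro: mult_closed inv_closed)
    then show "y' \<in> \<Gamma> `` {\<one>\<^bsub>H1\<^esub>} #>\<^bsub>H2\<^esub> y"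
      using xy \<open>y' \<in> \<Gamma> `` {x}\<close> mem_carrier by (auto intro: N.rcos_module_rev[OF group2])
  qed
  show "\<Gamma> `` {\<one>\<^bsub>H1\<^esub>} #>\<^bsub>H2\<^esub> y \<subseteq> \<Gamma> `` {x}"
  proof
    fix y' assume "y' \<in> \<Gamma> `` {\<one>\<^bsub>H1\<^esub>} #>\<^bsub>H2\<^esub> y"
    then obtain k where "(\<one>\<^bsub>H1\<^esub>, k) \<in> \<Gamma>" "y' = k \<otimes>\<^bsub>H2\<^esub> y"
      by (auto simp: r_coset_def)
    then show "y' \<in> \<Gamma> `` {x}"
      using mult_closed[OF _ assms] xy by fastforce
  qed
qed

lemma Image_rcos:
  assumes "(x, y) \<in> \<Gamma>"
  shows "\<Gamma> `` (\<Gamma>\<inverse> `` {\<one>\<^bsub>H2\<^esub>} #>\<^bsub>H1\<^esub> x) = \<Gamma> `` {\<one>\<^bsub>H1\<^esub>} #>\<^bsub>H2\<^esub> y"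
proof -
  have "\<Gamma>\<inverse> `` {\<one>\<^bsub>H2\<^esub>} #>\<^bsub>H1\<^esub> x = \<Gamma>\<inverse> `` {y}"
    using goursat.Image_singleton_eq_rcos[OF converse, of y x] assms by simp
  moreover have "\<Gamma> `` {x'} = \<Gamma> `` {x}" if "(x', y) \<in> \<Gamma>" for x'
    using Image_singleton_eq_rcos[OF that] Image_singleton_eq_rcos[OF assms] by simp
  then have "\<Gamma> `` (\<Gamma>\<inverse> `` {y}) = \<Gamma> `` {x}"
    using assms by blast
  ultimately show ?thesis
    using Image_singleton_eq_rcos[OF assms] by simp
qed

lemma rcosets_cases:
  assumes "C \<in> carrier (H1 Mod \<Gamma>\<inverse> `` {\<one>\<^bsub>H2\<^esub>})"
  obtains x y where "(x, y) \<in> \<Gamma>" "C = \<Gamma>\<inverse> `` {\<one>\<^bsub>H2\<^esub>} #>\<^bsub>H1\<^esub> x"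
proof -
  obtain x where "x \<in> carrier H1" "C = \<Gamma>\<inverse> `` {\<one>\<^bsub>H2\<^esub>} #>\<^bsub>H1\<^esub> x"
    using assms by (auto simp: FactGroup_def RCOSETS_def)
  moreover obtain y where "(x, y) \<in> \<Gamma>"
    using Domain calculation by blast
  ultimately show ?thesis
    using that by blast
qed

lemma Image_in_carrier:
  assumes "C \<in> carrier (H1 Mod \<Gamma>\<inverse> `` {\<one>\<^bsub>H2\<^esub>})"
  shows "\<Gamma> `` C \<in> carrier (H2 Mod \<Gamma> `` {\<one>\<^bsub>H1\<^esub>})"
proof -
  obtain x y where "(x, y) \<in> \<Gamma>" "C = \<Gamma>\<inverse> `` {\<one>\<^bsub>H2\<^esub>} #>\<^bsub>H1\<^esub> x"
    using assms by (rule rcosets_cases)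
  then show ?thesis
    using Image_rcos mem_carrier by (auto simp: FactGroup_def RCOSETS_def)
qed

lemma converse_Image_Image:
  assumes "C \<in> carrier (H1 Mod \<Gamma>\<inverse> `` {\<one>\<^bsub>H2\<^esub>})"
  shows "\<Gamma>\<inverse> `` (\<Gamma> `` C) = C"
proof -
  obtain x y where xy: "(x, y) \<in> \<Gamma>" and C: "C = \<Gamma>\<inverse> `` {\<one>\<^bsub>H2\<^esub>} #>\<^bsub>H1\<^esub> x"
    using assms by (rule rcosets_cases)
  show ?thesis
    using Image_rcos[OF xy] goursat.Image_rcos[OF converse, of y x] xy C by simp
qed

lemma Image_hom:
  "(\<lambda>C. \<Gamma> `` C) \<in> hom (H1 Mod \<Gamma>\<inverse> `` {\<one>\<^bsub>H2\<^esub>}) (H2 Mod \<Gamma> `` {\<one>\<^bsub>H1\<^esub>})"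
proof (rule homI)
  fix C D
  assume "C \<in> carrier (H1 Mod \<Gamma>\<inverse> `` {\<one>\<^bsub>H2\<^esub>})" "D \<in> carrier (H1 Mod \<Gamma>\<inverse> `` {\<one>\<^bsub>H2\<^esub>})"
  obtain x y where xy: "(x, y) \<in> \<Gamma>" and C: "C = \<Gamma>\<inverse> `` {\<one>\<^bsub>H2\<^esub>} #>\<^bsub>H1\<^esub> x"
    using \<open>C \<in> _\<close> by (rule rcosets_cases)
  obtain x' y' where xy': "(x', y') \<in> \<Gamma>" and D: "D = \<Gamma>\<inverse> `` {\<one>\<^bsub>H2\<^esub>} #>\<^bsub>H1\<^esub> x'"
    using \<open>D \<in> _\<close> by (rule rcosets_cases)
  have "C \<otimes>\<^bsub>H1 Mod \<Gamma>\<inverse> `` {\<one>\<^bsub>H2\<^esub>}\<^esub> D = \<Gamma>\<inverse> `` {\<one>\<^bsub>H2\<^esub>} #>\<^bsub>H1\<^esub> (x \<otimes>\<^bsub>H1\<^esub> x')"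
    using normal.rcos_sum[OF left_kernel_normal] xy xy' mem_carrier C D
    by (simp add: FactGroup_def)
  then have "\<Gamma> `` (C \<otimes>\<^bsub>H1 Mod \<Gamma>\<inverse> `` {\<one>\<^bsub>H2\<^esub>}\<^esub> D) = \<Gamma> `` {\<one>\<^bsub>H1\<^esub>} #>\<^bsub>H2\<^esub> (y \<otimes>\<^bsub>H2\<^esub> y')"
    using Image_rcos[OF mult_closed[OF xy xy']] by simp
  also have "\<dots> = \<Gamma> `` C \<otimes>\<^bsub>H2 Mod \<Gamma> `` {\<one>\<^bsub>H1\<^esub>}\<^esub> \<Gamma> `` D"
    using normal.rcos_sum[OF right_kernel_normal] xy xy' mem_carrier C D Image_rcos
    by (simp add: FactGroup_def)
  finally show "\<Gamma> `` (C \<otimes>\<^bsub>H1 Mod \<Gamma>\<inverse> `` {\<one>\<^bsub>H2\<^esub>}\<^esub> D) = \<Gamma> `` C \<otimes>\<^bsub>H2 Mod \<Gamma> `` {\<one>\<^bsub>H1\<^esub>}\<^esub> \<Gamma> `` D" .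
qed (rule Image_in_carrier)

lemma bij_betw_Image:
  "bij_betw (\<lambda>C. \<Gamma> `` C) (carrier (H1 Mod \<Gamma>\<inverse> `` {\<one>\<^bsub>H2\<^esub>})) (carrier (H2 Mod \<Gamma> `` {\<one>\<^bsub>H1\<^esub>}))"
proof (rule bij_betw_byWitness[where f' = "\<lambda>D. \<Gamma>\<inverse> `` D"])
  show "\<forall>C \<in> carrier (H1 Mod \<Gamma>\<inverse> `` {\<one>\<^bsub>H2\<^esub>}). \<Gamma>\<inverse> `` (\<Gamma> `` C) = C"
    using converse_Image_Image by blast
  show "\<forall>D \<in> carrier (H2 Mod \<Gamma> `` {\<one>\<^bsub>H1\<^esub>}). \<Gamma> `` (\<Gamma>\<inverse> `` D) = D"
    using goursat.converse_Image_Image[OF converse] by simp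
  show "(\<lambda>C. \<Gamma> `` C) ` carrier (H1 Mod \<Gamma>\<inverse> `` {\<one>\<^bsub>H2\<^esub>}) \<subseteq> carrier (H2 Mod \<Gamma> `` {\<one>\<^bsub>H1\<^esub>})"
    using Image_in_carrier by blast
  show "(\<lambda>D. \<Gamma>\<inverse> `` D) ` carrier (H2 Mod \<Gamma> `` {\<one>\<^bsub>H1\<^esub>}) \<subseteq> carrier (H1 Mod \<Gamma>\<inverse> `` {\<one>\<^bsub>H2\<^esub>})"
    using goursat.Image_in_carrier[OF converse] by auto
qed

lemma Image_iso:
  "(\<lambda>C. \<Gamma> `` C) \<in> iso (H1 Mod \<Gamma>\<inverse> `` {\<one>\<^bsub>H2\<^esub>}) (H2 Mod \<Gamma> `` {\<one>\<^bsub>H1\<^esub>})"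
  using Image_hom bij_betw_Image by (simp add: iso_def)

lemma Union_rcosets_preimage:
  assumes "\<V> \<subseteq> carrier (H2 Mod \<Gamma> `` {\<one>\<^bsub>H1\<^esub>})"
  shows "\<Union>{C \<in> carrier (H1 Mod \<Gamma>\<inverse> `` {\<one>\<^bsub>H2\<^esub>}). \<Gamma> `` C \<in> \<V>} =
           {x \<in> carrier H1. \<Gamma> `` {x} \<subseteq> \<Union>\<V>}"
proof
  show "\<Union>{C \<in> carrier (H1 Mod \<Gamma>\<inverse> `` {\<one>\<^bsub>H2\<^esub>}). \<Gamma> `` C \<in> \<V>} \<subseteq> {x \<in> carrier H1. \<Gamma> `` {x} \<subseteq> \<Union>\<V>}"
  proof
    fix x assume "x \<in> \<Union>{C \<in> carrier (H1 Mod \<Gamma>\<inverse> `` {\<one>\<^bsub>H2\<^esub>}). \<Gamma> `` C \<in> \<V>}"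
    then obtain C where C: "C \<in> carrier (H1 Mod \<Gamma>\<inverse> `` {\<one>\<^bsub>H2\<^esub>})" "\<Gamma> `` C \<in> \<V>" "x \<in> C"
      by blast
    then have "C \<subseteq> carrier H1"
      using subgroup.subset[OF normal_imp_subgroup[OF left_kernel_normal]]
      by (auto simp: FactGroup_def RCOSETS_def r_coset_def intro: monoid.m_closed[OF group.is_monoid[OF group1]])
    moreover have "\<Gamma> `` {x} \<subseteq> \<Union>\<V>"
      using C by blast
    ultimately show "x \<in> {x \<in> carrier H1. \<Gamma> `` {x} \<subseteq> \<Union>\<V>}"
      using C(3) by blast
  qed
  show "{x \<in> carrier H1. \<Gamma> `` {x} \<subseteq> \<Union>\<V>} \<subseteq> \<Union>{C \<in> carrier (H1 Mod \<Gamma>\<inverse> `` {\<one>\<^bsub>H2\<^esub>}). \<Gamma> `` C \<in> \<V>}"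
  proof
    fix x assume x: "x \<in> {x \<in> carrier H1. \<Gamma> `` {x} \<subseteq> \<Union>\<V>}"
    then obtain y where xy: "(x, y) \<in> \<Gamma>"
      using Domain by blast
    then obtain D where D: "D \<in> \<V>" "y \<in> D"
      using x by blast
    then obtain y' where "y' \<in> carrier H2" "D = \<Gamma> `` {\<one>\<^bsub>H1\<^esub>} #>\<^bsub>H2\<^esub> y'"
      using assms by (auto simp: FactGroup_def RCOSETS_def)
    then have "D = \<Gamma> `` (\<Gamma>\<inverse> `` {\<one>\<^bsub>H2\<^esub>} #>\<^bsub>H1\<^esub> x)"
      using group.repr_independence[OF group2] normal_imp_subgroup[OF right_kernel_normal] D(2)
        Image_rcos[OF xy] by metis
    moreover have "\<Gamma>\<inverse> `` {\<one>\<^bsub>H2\<^esub>} \<subseteq> carrier H1"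
      using mem_carrier by blast
    then have "\<Gamma>\<inverse> `` {\<one>\<^bsub>H2\<^esub>} #>\<^bsub>H1\<^esub> x \<in> carrier (H1 Mod \<Gamma>\<inverse> `` {\<one>\<^bsub>H2\<^esub>})"
      using group.rcosetsI[OF group1] x by (simp add: FactGroup_def)
    moreover have "x \<in> \<Gamma>\<inverse> `` {\<one>\<^bsub>H2\<^esub>} #>\<^bsub>H1\<^esub> x"
      using group.rcos_self[OF group1] normal_imp_subgroup[OF left_kernel_normal] x
      by simp
    ultimately show "x \<in> \<Union>{C \<in> carrier (H1 Mod \<Gamma>\<inverse> `` {\<one>\<^bsub>H2\<^esub>}). \<Gamma> `` C \<in> \<V>}"
      using D(1) by blast
  qed
qed

end

locale compatible_completions =
  fixes G :: "('g, 'e) monoid_scheme"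
    and H1 :: "('a, 'c) monoid_scheme" and T1 :: "'a topology" and r1 :: "'g \<Rightarrow> 'a"
    and H2 :: "('b, 'd) monoid_scheme" and T2 :: "'b topology" and r2 :: "'g \<Rightarrow> 'b"
  assumes group: "group G"
    and hom1: "r1 \<in> hom G H1" and topological_group1: "topological_group H1 T1"
    and Hausdorff1: "Hausdorff_space T1" and locally_compact1: "locally_compact_space T1"
    and dense1: "T1 closure_of (r1 ` carrier G) = topspace T1"
    and hom2: "r2 \<in> hom G H2" and topological_group2: "topological_group H2 T2"
    and Hausdorff2: "Hausdorff_space T2" and locally_compact2: "locally_compact_space T2"
    and dense2: "T2 closure_of (r2 ` carrier G) = topspace T2"
    and compact_closure_iff: "\<And>S. S \<subseteq> carrier G \<Longrightarrow>
       compactin T1 (T1 closure_of (r1 ` S)) \<longleftrightarrow> compactin T2 (T2 closure_of (r2 ` S))"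
begin

lemma group1: "group H1" and topspace1: "topspace T1 = carrier H1"
  and group2: "group H2" and topspace2: "topspace T2 = carrier H2"
  using topological_group1 topological_group2 by (auto simp: topological_group_def)

definition graph_closure :: "('a \<times> 'b) set"
  where "graph_closure = prod_topology T1 T2 closure_of ((\<lambda>g. (r1 g, r2 g)) ` carrier G)"

lemma subgroup_graph_closure: "subgroup graph_closure (H1 \<times>\<times> H2)"
proof -
  have "group_hom G (H1 \<times>\<times> H2) (\<lambda>g. (r1 g, r2 g))"
    using group DirProd_group[OF group1 group2] hom1 hom2
    by (simp add: group_hom_def group_hom_axioms_def hom_paired)
  then show ?thesis
    unfolding graph_closure_def
    by (intro subgroup_closure_of topological_group_DirProd topological_group1 topological_group2
        group_hom.img_is_subgroup)
qed

lemma graph_in_graph_closure: "g \<in> carrier G \<Longrightarrow> (r1 g, r2 g) \<in> graph_closure"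
  unfolding graph_closure_def
  using hom1 hom2 topspace1 topspace2
  by (intro closure_of_subset[THEN subsetD]) (auto simp: hom_def)

lemma closedin_graph_closure: "closedin (prod_topology T1 T2) graph_closure"
  by (simp add: graph_closure_def)

(* Over a relatively compact neighbourhood N of x, the graph closure lies in the closure of
   r2 ` {g. r1 g \<in> N}, which is compact by compact_closure_iff. *)
lemma graph_closure_Image_nbhd_compact:
  assumes "x \<in> carrier H1"
  obtains N C where "openin T1 N" "x \<in> N" "compactin T2 C" "graph_closure `` N \<subseteq> C"
proof -
  have "\<exists>N K. openin T1 N \<and> compactin T1 K \<and> x \<in> N \<and> N \<subseteq> K"
    using locally_compact1 assms topspace1 unfolding locally_compact_space_def by simp
  then obtain N K where N: "openin T1 N" "compactin T1 K" "x \<in> N" "N \<subseteq> K"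
    by blast
  define S where "S = {g \<in> carrier G. r1 g \<in> N}"
  have "T1 closure_of (r1 ` S) \<subseteq> K"
    using closure_of_minimal[of "r1 ` S" K T1] compactin_imp_closedin[OF Hausdorff1 N(2)] N(4)
    by (auto simp: S_def)
  then have "compactin T1 (T1 closure_of (r1 ` S))"
    using closed_compactin[OF N(2)] closedin_closure_of by blast
  then have C: "compactin T2 (T2 closure_of (r2 ` S))"
    using compact_closure_iff[of S] by (simp add: S_def)
  have "graph_closure `` N \<subseteq> T2 closure_of (r2 ` S)"
  proof
    fix y assume "y \<in> graph_closure `` N"
    then obtain x' where "x' \<in> N" "(x', y) \<in> graph_closure"
      by blast
    moreover have "openin (prod_topology T1 T2) (N \<times> topspace T2)"
      using N(1) by (simp add: openin_prod_Times_iff)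
    ultimately have "(x', y) \<in> prod_topology T1 T2 closure_of
                        ((N \<times> topspace T2) \<inter> (\<lambda>g. (r1 g, r2 g)) ` carrier G)"
      using openin_Int_closure_of_subset graph_closure_def closure_of_subset_topspace by fastforce
    also have "\<dots> \<subseteq> prod_topology T1 T2 closure_of (r1 ` S \<times> r2 ` S)"
      by (intro closure_of_mono) (auto simp: S_def)
    finally show "y \<in> T2 closure_of (r2 ` S)"
      by (simp add: closure_of_Times)
  qed
  then show ?thesis
    by (rule that[OF N(1,3) C])
qed

(* Upper semicontinuity: near x only the compact set C - V has to be avoided, and the tube lemma
   separates it from x uniformly. *)
lemma openin_graph_closure_upper_preimage:
  assumes "openin T2 V"
  shows "openin T1 {x \<in> topspace T1. graph_closure `` {x} \<subseteq> V}"
proof (subst openin_subopen, intro ballI)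
  fix x assume "x \<in> {x \<in> topspace T1. graph_closure `` {x} \<subseteq> V}"
  then have x: "x \<in> topspace T1" and xV: "graph_closure `` {x} \<subseteq> V"
    by auto
  obtain N C where N: "openin T1 N" "x \<in> N" and C: "compactin T2 C" "graph_closure `` N \<subseteq> C"
    using x topspace1 graph_closure_Image_nbhd_compact by metis
  have compact: "compactin T2 (C - V)"
    using closed_compactin[OF C(1) Diff_subset closedin_diff[OF compactin_imp_closedin[OF Hausdorff2 C(1)] assms]] .
  have "openin (prod_topology T1 T2) (topspace (prod_topology T1 T2) - graph_closure)"
    using openin_diff[OF openin_topspace closedin_graph_closure] .
  moreover have "{x} \<times> (C - V) \<subseteq> topspace (prod_topology T1 T2) - graph_closure"
    using x xV compactin_subset_topspace[OF C(1)] by auto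
  ultimately have "\<exists>W V'. openin T1 W \<and> openin T2 V' \<and> x \<in> W \<and> C - V \<subseteq> V' \<and>
                      W \<times> V' \<subseteq> topspace (prod_topology T1 T2) - graph_closure"
    by (rule tube_lemma_right[OF _ compact x])
  then obtain W V' where W: "openin T1 W" "x \<in> W"
    and V': "C - V \<subseteq> V'" "W \<times> V' \<subseteq> topspace (prod_topology T1 T2) - graph_closure"
    by blast
  have "graph_closure `` (N \<inter> W) \<subseteq> V"
  proof
    fix y assume "y \<in> graph_closure `` (N \<inter> W)"
    then obtain x' where "x' \<in> N" "x' \<in> W" "(x', y) \<in> graph_closure"
      by blast
    moreover have "y \<in> C"
      using C(2) calculation by blast
    ultimately show "y \<in> V"
      using V' by blast
  qed
  moreover have "N \<inter> W \<subseteq> topspace T1"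
    using openin_subset[OF N(1)] by blast
  ultimately show "\<exists>W'. openin T1 W' \<and> x \<in> W' \<and> W' \<subseteq> {x \<in> topspace T1. graph_closure `` {x} \<subseteq> V}"
    using N W by (intro exI[of _ "N \<inter> W"]) blast
qed

lemma Domain_graph_closure: "Domain graph_closure = carrier H1"
proof
  show "Domain graph_closure \<subseteq> carrier H1"
    using subgroup.subset[OF subgroup_graph_closure] by auto
  show "carrier H1 \<subseteq> Domain graph_closure"
  proof
    fix x assume x: "x \<in> carrier H1"
    show "x \<in> Domain graph_closure"
    proof (rule ccontr)
      assume "x \<notin> Domain graph_closure"
      define E where "E = {x \<in> topspace T1. graph_closure `` {x} \<subseteq> {}}"
      have "x \<in> E"
        using \<open>x \<notin> Domain graph_closure\<close> x topspace1 by (auto simp: E_def)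
      moreover have "openin T1 E"
        unfolding E_def by (rule openin_graph_closure_upper_preimage[OF openin_empty])
      moreover have "x \<in> T1 closure_of (r1 ` carrier G)"
        using x dense1 topspace1 by simp
      ultimately obtain g where "g \<in> carrier G" "r1 g \<in> E"
        unfolding in_closure_of by blast
      then have "g \<in> carrier G" "graph_closure `` {r1 g} \<subseteq> {}"
        by (auto simp: E_def)
      then show False
        using graph_in_graph_closure by blast
    qed
  qed
qed

lemma compactin_graph_closure_Image_singleton:
  assumes "x \<in> carrier H1"
  shows "compactin T2 (graph_closure `` {x})"
proof -
  obtain N C where N: "openin T1 N" "x \<in> N" and C: "compactin T2 C" "graph_closure `` N \<subseteq> C"
    by (rule graph_closure_Image_nbhd_compact[OF assms])
  have "continuous_map T2 (prod_topology T1 T2) (\<lambda>y. (x, y))"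
    using assms topspace1 by (intro continuous_map_pairedI continuous_map_id[unfolded id_def]) auto
  then have "closedin T2 {y \<in> topspace T2. (x, y) \<in> graph_closure}"
    by (rule closedin_continuous_map_preimage[OF _ closedin_graph_closure])
  moreover have "{y \<in> topspace T2. (x, y) \<in> graph_closure} = graph_closure `` {x}"
    using subgroup.subset[OF subgroup_graph_closure] topspace2 by auto
  moreover have "graph_closure `` {x} \<subseteq> C"
    using N(2) C(2) by blast
  ultimately show ?thesis
    using closed_compactin[OF C(1)] by simp
qed

end

sublocale compatible_completions \<subseteq> swapped: compatible_completions G H2 T2 r2 H1 T1 r1
  using group hom1 hom2 topological_group1 topological_group2 Hausdorff1 Hausdorff2
    locally_compact1 locally_compact2 dense1 dense2 compact_closure_iff
  by (simp add: compatible_completions_def)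

context compatible_completions
begin

lemma swapped_graph_closure: "swapped.graph_closure = graph_closure\<inverse>"
proof -
  have "(\<lambda>g. (r1 g, r2 g)) ` carrier G \<subseteq> topspace (prod_topology T1 T2)"
    using hom1 hom2 topspace1 topspace2 by (auto simp: hom_def)
  then have "prod_topology T2 T1 closure_of ((\<lambda>(x, y). (y, x)) ` (\<lambda>g. (r1 g, r2 g)) ` carrier G) =
             (\<lambda>(x, y). (y, x)) ` graph_closure"
    unfolding graph_closure_def by (rule homeomorphic_map_closure_of[OF homeomorphic_map_swap])
  moreover have "(\<lambda>(x, y). (y, x)) ` (\<lambda>g. (r1 g, r2 g)) ` carrier G = (\<lambda>g. (r2 g, r1 g)) ` carrier G"
    by (simp add: image_image)
  moreover have "(\<lambda>(x, y). (y, x)) ` graph_closure = graph_closure\<inverse>"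
    by auto
  ultimately show ?thesis
    by (simp add: swapped.graph_closure_def)
qed

lemma goursat_graph_closure: "goursat H1 H2 graph_closure"
  using group1 group2 subgroup_graph_closure Domain_graph_closure swapped.Domain_graph_closure
  by (simp add: goursat_def swapped_graph_closure)

sublocale graph: goursat H1 H2 graph_closure
  by (rule goursat_graph_closure)

lemma continuous_map_graph_closure_Image:
  "continuous_map (quotient_group_topology H1 T1 (graph_closure\<inverse> `` {\<one>\<^bsub>H2\<^esub>}))
     (quotient_group_topology H2 T2 (graph_closure `` {\<one>\<^bsub>H1\<^esub>})) (\<lambda>C. graph_closure `` C)"
proof -
  note subgroup1 = normal_imp_subgroup[OF graph.left_kernel_normal]
    and subgroup2 = normal_imp_subgroup[OF graph.right_kernel_normal]
  show ?thesis
    unfolding continuous_map_def topspace_quotient_group_topology[OF group1 subgroup1 topspace1]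
      topspace_quotient_group_topology[OF group2 subgroup2 topspace2]
      openin_quotient_group_topology[OF group1 subgroup1] openin_quotient_group_topology[OF group2 subgroup2]
  proof (intro conjI allI impI)
    show "(\<lambda>C. graph_closure `` C) \<in> carrier (H1 Mod graph_closure\<inverse> `` {\<one>\<^bsub>H2\<^esub>})
            \<rightarrow> carrier (H2 Mod graph_closure `` {\<one>\<^bsub>H1\<^esub>})"
      using graph.Image_in_carrier by blast
    fix \<V> assume \<V>: "\<V> \<subseteq> carrier (H2 Mod graph_closure `` {\<one>\<^bsub>H1\<^esub>}) \<and> openin T2 (\<Union>\<V>)"
    show "{C \<in> carrier (H1 Mod graph_closure\<inverse> `` {\<one>\<^bsub>H2\<^esub>}). graph_closure `` C \<in> \<V>}
            \<subseteq> carrier (H1 Mod graph_closure\<inverse> `` {\<one>\<^bsub>H2\<^esub>})"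
      by blast
    show "openin T1 (\<Union>{C \<in> carrier (H1 Mod graph_closure\<inverse> `` {\<one>\<^bsub>H2\<^esub>}). graph_closure `` C \<in> \<V>})"
      using openin_graph_closure_upper_preimage[of "\<Union>\<V>"] \<V> graph.Union_rcosets_preimage[of \<V>]
      by (simp add: topspace1)
  qed
qed

end

(* Reopening the context makes the preceding lemmas available for the swapped instance. *)
context compatible_completions
begin

lemma homeomorphic_map_graph_closure_Image:
  "homeomorphic_map (quotient_group_topology H1 T1 (graph_closure\<inverse> `` {\<one>\<^bsub>H2\<^esub>}))
     (quotient_group_topology H2 T2 (graph_closure `` {\<one>\<^bsub>H1\<^esub>})) (\<lambda>C. graph_closure `` C)"
  unfolding homeomorphic_map_maps homeomorphic_maps_def
proof (intro exI conjI)
  show "continuous_map (quotient_group_topology H2 T2 (graph_closure `` {\<one>\<^bsub>H1\<^esub>}))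
          (quotient_group_topology H1 T1 (graph_closure\<inverse> `` {\<one>\<^bsub>H2\<^esub>})) (\<lambda>D. graph_closure\<inverse> `` D)"
    using swapped.continuous_map_graph_closure_Image by (simp add: swapped_graph_closure)
  show "\<forall>C \<in> topspace (quotient_group_topology H1 T1 (graph_closure\<inverse> `` {\<one>\<^bsub>H2\<^esub>})).
          graph_closure\<inverse> `` (graph_closure `` C) = C"
    using graph.converse_Image_Image
    by (simp add: topspace_quotient_group_topology[OF group1 normal_imp_subgroup[OF graph.left_kernel_normal] topspace1])
  show "\<forall>D \<in> topspace (quotient_group_topology H2 T2 (graph_closure `` {\<one>\<^bsub>H1\<^esub>})).
          graph_closure `` (graph_closure\<inverse> `` D) = D"
    using goursat.converse_Image_Image[OF graph.converse]
    by (simp add: topspace_quotient_group_topology[OF group2 normal_imp_subgroup[OF graph.right_kernel_normal] topspace2])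
qed (rule continuous_map_graph_closure_Image)

lemma isomorphic_quotients_by_compact_normal_subgroups:
  "\<exists>K1 K2 lam.
     K1 \<lhd> H1 \<and> compactin T1 K1 \<and> K2 \<lhd> H2 \<and> compactin T2 K2 \<and>
     lam \<in> iso (H1 Mod K1) (H2 Mod K2) \<and>
     homeomorphic_map (quotient_group_topology H1 T1 K1) (quotient_group_topology H2 T2 K2) lam \<and>
     (\<forall>g\<in>carrier G. lam (K1 #>\<^bsub>H1\<^esub> r1 g) = K2 #>\<^bsub>H2\<^esub> r2 g)"
proof (intro exI conjI)
  show "compactin T1 (graph_closure\<inverse> `` {\<one>\<^bsub>H2\<^esub>})"
    using swapped.compactin_graph_closure_Image_singleton[OF monoid.one_closed[OF group.is_monoid[OF group2]]]
    by (simp add: swapped_graph_closure)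
  show "compactin T2 (graph_closure `` {\<one>\<^bsub>H1\<^esub>})"
    using compactin_graph_closure_Image_singleton[OF monoid.one_closed[OF group.is_monoid[OF group1]]] .
  show "\<forall>g\<in>carrier G. graph_closure `` (graph_closure\<inverse> `` {\<one>\<^bsub>H2\<^esub>} #>\<^bsub>H1\<^esub> r1 g) =
                      graph_closure `` {\<one>\<^bsub>H1\<^esub>} #>\<^bsub>H2\<^esub> r2 g"
    using graph.Image_rcos[OF graph_in_graph_closure] by blast
qed (fact graph.left_kernel_normal graph.right_kernel_normal graph.Image_iso
       homeomorphic_map_graph_closure_Image)+

end

theorem theoremC:
  fixes G :: "'g monoid" and X :: "'x::metric_space set" and act :: "'g \<Rightarrow> 'x \<Rightarrow> 'x"
    and H1 :: "'h1 monoid" and T1 :: "'h1 topology" and \<rho>1 :: "'g \<Rightarrow> 'h1"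
    and H2 :: "'h2 monoid" and T2 :: "'h2 topology" and \<rho>2 :: "'g \<Rightarrow> 'h2"
  assumes "group G"
    and "quasi_geodesic X"
    and "quasi_action G X act"
    and "cobounded_action G X act"
    and "topological_completion G X act H1 T1 \<rho>1"
    and "topological_completion G X act H2 T2 \<rho>2"
  shows "\<exists>K1 K2 lam.
           K1 \<lhd> H1 \<and> compactin T1 K1 \<and> K2 \<lhd> H2 \<and> compactin T2 K2 \<and>
           lam \<in> iso (H1 Mod K1) (H2 Mod K2) \<and>
           homeomorphic_map (quotient_group_topology H1 T1 K1) (quotient_group_topology H2 T2 K2) lam \<and>
           (\<forall>g\<in>carrier G. lam (K1 #>\<^bsub>H1\<^esub> \<rho>1 g) = K2 #>\<^bsub>H2\<^esub> \<rho>2 g)"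
proof -
  have c1: "\<rho>1 \<in> hom G H1" "topological_group H1 T1" "Hausdorff_space T1" "locally_compact_space T1"
    "T1 closure_of (\<rho>1 ` carrier G) = topspace T1"
    "\<And>S. S \<subseteq> carrier G \<Longrightarrow> bounded_subset G X act S \<longleftrightarrow> compactin T1 (T1 closure_of (\<rho>1 ` S))"
    using assms(5) by (auto simp: topological_completion_def)
  have c2: "\<rho>2 \<in> hom G H2" "topological_group H2 T2" "Hausdorff_space T2" "locally_compact_space T2"
    "T2 closure_of (\<rho>2 ` carrier G) = topspace T2"
    "\<And>S. S \<subseteq> carrier G \<Longrightarrow> bounded_subset G X act S \<longleftrightarrow> compactin T2 (T2 closure_of (\<rho>2 ` S))"
    using assms(6) by (auto simp: topological_completion_def)
  have "\<And>S. S \<subseteq> carrier G \<Longrightarrow>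
          compactin T1 (T1 closure_of (\<rho>1 ` S)) \<longleftrightarrow> compactin T2 (T2 closure_of (\<rho>2 ` S))"
    using c1(6) c2(6) by blast
  then have "compatible_completions G H1 T1 \<rho>1 H2 T2 \<rho>2"
    by (rule compatible_completions.intro[OF assms(1) c1(1-5) c2(1-5)])
  then show ?thesis
    by (rule compatible_completions.isomorphic_quotients_by_compact_normal_subgroups)
qed

end
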